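(* Let $N\le M$ and consider $N$ players and $M$ arms. For each player $n$ and arm $i$, let $\{r_{n,i}(t)\}_{t\ge1}$ be an i.i.d. sequence with mean $\mu_{n,i}>0$, variance $\sigma_{n,i}^2$, continuous distribution, and satisfying Bernstein's condition $E|r_{n,i}(t)-\mu_{n,i}|^k\le\frac12 k!\,\sigma_{n,i}^2 b_{n,i}^{k-2}$ for all integers $k\ge3$ and some $b_{n,i}>0$; these sequences are independent across different $(n,i)$. Let $\sigma_{\max}=\max_{n,i}\sigma_{n,i}$, $b_{\max}=\max_{n,i}b_{n,i}$. In each exploration turn, every player independently chooses an arm uniformly at random from $\{1,\dots,M\}$ (independently of the rewards), and player $n$ on arm $i$ at turn $t$ receives $r_{n,i}(t)\eta_i(\boldsymbol a(t))$. Fix $c_1>0$, $\delta>0$, and for epoch $k\ge 1$ let the exploration phases of epochs $1,\dots,k$ contain together $T_e(k)=c_1\sum_{j=1}^k j^\delta$ exploration turns. Let $\mu^k_{n,i}$ be the average of $r_{n,i}(t)$ over those exploration turns (up to epoch $k$) in which player $n$ was the only player choosing arm $i$. Let $g_n(\boldsymbol a)=\mu_{n,a_n}\eta_{a_n}(\boldsymbol a)$, assume $\boldsymbol a^*$ is the unique maximizer of $\sum_n g_n(\boldsymbol a)$ with value $J_1$, and let $J_2$ be the second best objective. Let $\boldsymbol a^{k*}$ be a maximizer of $\sum_{n}\mu^k_{n,a_n}\eta_{a_n}(\boldsymbol a)$ and let $P_{e,k}$ denote the event $\boldsymbol a^{k*}\neq\boldsymbol a^*$. Define $$w=\frac{(J_1-J_2)^2}{MN^2\left(80\sigma_{\max}^2+\frac{40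 b_{\max}}{N}(J_1-J_2)\right)}.$$ Then $$\Pr(P_{e,k})\le 2NMe^{-wc_1(k/2)^\delta k}+NMe^{-\frac{c_1(k/2)^\delta}{36M^2}k},$$ and moreover $$\Pr\Big(\bigcup_{r=0}^{\lfloor k/2\rfloor}P_{e,k-r}\Big)\le\frac{2NM}{1-e^{-wc_1(k/4)^\delta}}e^{-\frac w2 c_1(k/4)^\delta k}+\frac{NM}{1-e^{-\frac{1}{36M^2}c_1(k/4)^\delta}}e^{-\frac{1}{72M^2}c_1(k/4)^\delta k}.$$
   Context: For a strategy profile $\boldsymbol a\in\{1,\dots,M\}^N$ and an arm $i$, the no-collision indicator is $\eta_i(\boldsymbol a)=0$ if more than one player chose arm $i$ in $\boldsymbol a$, and $1$ otherwise. With $J_1=\max_{\boldsymbol a}\sum_n g_n(\boldsymbol a)$, the second best objective $J_2$ is the maximum of $\sum_n g_n(\boldsymbol a)$ over all profiles $\boldsymbol a$ with $\sum_n g_n(\boldsymbol a)<J_1$ (assumed to exist). *)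

theory Defs
  imports "HOL-Probability.Probability"
begin

text \<open>Players are indexed by 0..<N, arms by 0..<M (0-based), exploration turns by 1,2,...\<close>

definition eta :: "nat \<Rightarrow> (nat \<Rightarrow> nat) \<Rightarrow> nat \<Rightarrow> real" where
  "eta N a i = (if card {n \<in> {0..<N}. a n = i} > 1 then 0 else 1)"

definition profiles :: "nat \<Rightarrow> nat \<Rightarrow> (nat \<Rightarrow> nat) set" where
  "profiles N M = {0..<N} \<rightarrow>\<^sub>E {0..<M}"

definition objective :: "nat \<Rightarrow> (nat \<Rightarrow> nat \<Rightarrow> real) \<Rightarrow> (nat \<Rightarrow> nat) \<Rightarrow> real" where
  "objective N mu a = (\<Sum>n<N. mu n (a n) * eta N a (a n))"

definition J1 :: "nat \<Rightarrow> nat \<Rightarrow> (nat \<Rightarrow> nat \<Rightarrow> real) \<Rightarrow> real" where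
  "J1 N M mu = Max (objective N mu ` profiles N M)"

definition J2 :: "nat \<Rightarrow> nat \<Rightarrow> (nat \<Rightarrow> nat \<Rightarrow> real) \<Rightarrow> real" where
  "J2 N M mu = Max {objective N mu a | a. a \<in> profiles N M \<and> objective N mu a < J1 N M mu}"

definition explore_turns :: "real \<Rightarrow> real \<Rightarrow> nat \<Rightarrow> nat" where
  "explore_turns c1 \<delta> k = nat \<lceil>c1 * (\<Sum>j=1..k. real j powr \<delta>)\<rceil>"

text \<open>Exploration turns among 1..T in which player n was the only player choosing arm i;
  A t m \<omega> is the arm chosen by player m at exploration turn t.\<close>
definition solo_turns :: "nat \<Rightarrow> (nat \<Rightarrow> nat \<Rightarrow> 'a \<Rightarrow> nat) \<Rightarrow> nat \<Rightarrow> nat \<Rightarrow> nat \<Rightarrow> 'a \<Rightarrow> nat set" where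
  "solo_turns N A T n i \<omega> = {t \<in> {1..T}. A t n \<omega> = i \<and> (\<forall>m<N. m \<noteq> n \<longrightarrow> A t m \<omega> \<noteq> i)}"

text \<open>Empirical mean mu^k_{n,i} (0 if there is no such turn).\<close>
definition emp_mean :: "nat \<Rightarrow> (nat \<Rightarrow> nat \<Rightarrow> 'a \<Rightarrow> nat) \<Rightarrow> (nat \<Rightarrow> nat \<Rightarrow> nat \<Rightarrow> 'a \<Rightarrow> real)
    \<Rightarrow> nat \<Rightarrow> nat \<Rightarrow> nat \<Rightarrow> 'a \<Rightarrow> real" where
  "emp_mean N A r T n i \<omega> =
     (\<Sum>t \<in> solo_turns N A T n i \<omega>. r n i t \<omega>) / real (card (solo_turns N A T n i \<omega>))"

definition err_event :: "'a measure \<Rightarrow> nat \<Rightarrow> nat \<Rightarrow> (nat \<Rightarrow> nat \<Rightarrow> 'a \<Rightarrow> nat)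
    \<Rightarrow> (nat \<Rightarrow> nat \<Rightarrow> nat \<Rightarrow> 'a \<Rightarrow> real) \<Rightarrow> nat \<Rightarrow> (nat \<Rightarrow> nat) \<Rightarrow> 'a set" where
  "err_event P N M A r T astar =
     {\<omega> \<in> space P. \<exists>a \<in> profiles N M. a \<noteq> astar \<and>
        (\<forall>b \<in> profiles N M. objective N (\<lambda>n i. emp_mean N A r T n i \<omega>) b
                            \<le> objective N (\<lambda>n i. emp_mean N A r T n i \<omega>) a)}"

end

theory Submission
  imports Defs
begin

text \<open>
  Fix a player \<open>n\<close>, an arm \<open>i\<close>, a sign \<open>s = \<plusminus>1\<close> and \<open>x = (J\<^sub>1 - J\<^sub>2) / (2N)\<close>, and sum
  \<open>S\<^sub>t (s (r\<^sub>t - \<mu>) - x)\<close> over the exploration turns, where \<open>S\<^sub>t\<close> indicates that player \<open>n\<close>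
  was alone on arm \<open>i\<close> in turn \<open>t\<close>. The turns are independent, \<open>S\<^sub>t\<close> is independent of the
  reward \<open>r\<^sub>t\<close> with \<open>E S\<^sub>t = (1/M) (1 - 1/M)\<^bsup>N-1\<^esup> \<ge> 1/(3M)\<close>, and Bernstein's moment condition
  bounds the moment generating function of \<open>r\<^sub>t\<close>; a Chernoff bound therefore makes each of these
  \<open>2NM\<close> sums nonnegative with probability at most \<open>exp (-T (1 - e\<^bsup>-\<eta>\<^esup>) / (3M))\<close>, where
  \<open>\<eta> = x\<^sup>2 / (2 (\<sigma>\<^sup>2 + b x))\<close> for the largest \<open>\<sigma>\<close> and \<open>b\<close>. If all of them are negative, every
  empirical mean is within \<open>x\<close> of the true mean, every objective value moves by less than
  \<open>(J\<^sub>1 - J\<^sub>2) / 2\<close>, and \<open>a\<^sup>*\<close> stays the unique empirical maximiser. A case split on \<open>\<eta>\<close> together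
  with \<open>T\<^sub>e(k) \<ge> c\<^sub>1 k (k/2)\<^sup>\<delta> / 2\<close> gives the first bound; the union over epochs sums a
  geometric series.
\<close>

section \<open>Elementary inequalities\<close>

lemma sums_abs_power_tail:
  fixes y :: real
  shows "(\<lambda>j. \<bar>y\<bar> ^ (j + 2) / fact (j + 2)) sums (exp \<bar>y\<bar> - 1 - \<bar>y\<bar>)"
proof -
  have "(\<lambda>j. \<bar>y\<bar> ^ j / fact j) sums exp \<bar>y\<bar>"
    using exp_converges[of "\<bar>y\<bar>"] by (simp add: divide_inverse mult.commute scaleR_conv_of_real)
  then show ?thesis
    using sums_iff_shift[of "\<lambda>j. \<bar>y\<bar> ^ j / fact j" 2] by (simp add: eval_nat_numeral diff_diff_eq)
qed

lemma exp_le_one_plus_abs_tail: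
  fixes y :: real
  shows "exp y \<le> 1 + y + (\<Sum>j. \<bar>y\<bar> ^ (j + 2) / fact (j + 2))"
proof -
  have "exp y - y \<le> exp \<bar>y\<bar> - \<bar>y\<bar>"
  proof (cases "0 \<le> y")
    case False
    then show ?thesis using real_le_x_sinh[of "- y"] by (simp add: exp_minus)
  qed simp
  then show ?thesis using sums_unique[OF sums_abs_power_tail[of y]] by simp
qed

lemma exp_neg_le_inverse_one_plus:
  fixes y :: real
  assumes "0 \<le> y"
  shows "exp (- y) \<le> 1 / (1 + y)"
  using exp_ge_add_one_self[of y] assms by (simp add: exp_minus field_simps)

lemma exp_neg_one_le_power:
  assumes "1 \<le> N" "N \<le> M"
  shows "exp (-1) \<le> (1 - 1 / real M) ^ (N - 1)"
proof (cases "M = 1")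
  case True
  then show ?thesis using assms by simp
next
  case False
  define K where "K = M - 1"
  have K: "1 \<le> K" "real M = real K + 1" "N - 1 \<le> K" using assms False by (auto simp: K_def)
  have "exp (- (1 / real K)) \<le> 1 - 1 / real M"
    using exp_neg_le_inverse_one_plus[of "1 / real K"] K by (simp add: field_simps)
  then have "exp (- (1 / real K)) ^ K \<le> (1 - 1 / real M) ^ K"
    by (rule power_mono) simp
  moreover have "exp (- (1 / real K)) ^ K = exp (-1)"
    using K by (simp add: exp_of_nat_mult[symmetric])
  moreover have "(1 - 1 / real M) ^ K \<le> (1 - 1 / real M) ^ (N - 1)"
    using K by (intro power_decreasing) auto
  ultimately show ?thesis by simp
qed

lemma one_minus_exp_neg_ge:
  fixes \<eta> :: real
  assumes "0 \<le> \<eta>"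
  shows "min (2/3 * \<eta>) (1/3) \<le> 1 - exp (- \<eta>)"
proof (cases "\<eta> \<le> 1/2")
  case True
  have "2/3 * \<eta> * (1 + \<eta>) \<le> 2/3 * \<eta> * (3/2)"
    using True assms by (intro mult_left_mono) auto
  then have "2/3 * \<eta> \<le> 1 - 1 / (1 + \<eta>)"
    using assms by (simp add: field_simps)
  then show ?thesis using exp_neg_le_inverse_one_plus[OF assms] by simp
next
  case False
  then have "1 / (1 + \<eta>) \<le> 2/3" by (simp add: field_simps)
  then show ?thesis using exp_neg_le_inverse_one_plus[OF assms] by simp
qed

lemma le_of_le_twice_square:
  fixes p K z :: real
  assumes "2 \<le> K" "p \<le> 1" "p \<le> 2 * K * z\<^sup>2" "0 \<le> z"
  shows "p \<le> K * z"
proof (cases "z \<le> 1/2")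
  case True
  then have "2 * K * z\<^sup>2 \<le> K * z"
    using assms mult_left_mono[of "2 * z" 1 "K * z"] by (simp add: power2_eq_square mult_ac)
  then show ?thesis using assms by linarith
next
  case False
  then show ?thesis using assms mult_mono[of 2 K "1/2" z] by simp
qed

lemma chernoff_exponent_ge:
  fixes \<eta> T T' :: real and M :: nat
  assumes \<eta>: "0 < \<eta>" and M: "2 \<le> M" and T: "T' / 2 \<le> T" "0 \<le> T'"
  shows "\<eta> / (10 * real M) * T' \<le> T * (1 - exp (- \<eta>)) / (3 * real M)
         \<or> T' / (36 * real M ^ 2) * 2 \<le> T * (1 - exp (- \<eta>)) / (3 * real M)"
proof -
  define y where "y = 1 - exp (- \<eta>)"
  have M': "2 \<le> real M" using M by simp
  have rate: "min (2/3 * \<eta>) (1/3) \<le> y" using one_minus_exp_neg_ge \<eta> by (simp add: y_def)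
  have Ty: "0 \<le> T * y" using T rate \<eta> by (intro mult_nonneg_nonneg) auto
  show ?thesis
  proof (cases "\<eta> \<le> 1/2")
    case True
    have "\<eta> / (10 * real M) * T' = (T' / 2 * (2/3 * \<eta>)) * (3 / (10 * real M))" by simp
    also have "\<dots> \<le> (T * y) * (3 / (10 * real M))"
      using True rate T \<eta> by (intro mult_right_mono mult_mono) auto
    also have "\<dots> \<le> (T * y) * (1 / (3 * real M))"
      using Ty M' by (intro mult_left_mono) (auto simp: field_simps)
    finally show ?thesis by (simp add: y_def)
  next
    case False
    have "T' / (36 * real M ^ 2) * 2 \<le> T' / (36 * real M) * 2"
      using T M' by (intro mult_right_mono divide_left_mono) (auto simp: power2_eq_square)
    also have "\<dots> = (T' / 2) * (1/3) * (1 / (3 * real M))" by simp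
    also have "\<dots> \<le> (T * y) * (1 / (3 * real M))"
      using False rate T by (intro mult_right_mono mult_mono) auto
    finally show ?thesis by (simp add: y_def)
  qed
qed

text \<open>For a small rate \<open>\<eta>\<close> the first exponential dominates; for a large one the
  Chernoff bound is at most \<open>2NMz\<^sup>2\<close> with \<open>z\<close> the second exponential.\<close>

lemma chernoff_bound_le_two_rates:
  fixes p \<eta> T T' :: real and N M :: nat
  assumes \<eta>: "0 < \<eta>" and NM: "1 \<le> N" "2 \<le> M" and T: "T' / 2 \<le> T" "0 \<le> T'"
    and p: "p \<le> 1" "p \<le> 2 * real N * real M * exp (- T * (1 - exp (- \<eta>)) / (3 * real M))"
  shows "p \<le> 2 * real N * real M * exp (- (\<eta> / (10 * real M)) * T') + real N * real M * exp (- (T' / (36 * real M ^ 2)))"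
proof -
  define z where "z = exp (- (T' / (36 * real M ^ 2)))"
  have p_le: "p \<le> 2 * real N * real M * exp (- e)" if "e \<le> T * (1 - exp (- \<eta>)) / (3 * real M)" for e
  proof -
    have "exp (- T * (1 - exp (- \<eta>)) / (3 * real M)) \<le> exp (- e)" using that by simp
    then have "2 * real N * real M * exp (- T * (1 - exp (- \<eta>)) / (3 * real M)) \<le> 2 * real N * real M * exp (- e)"
      by (rule mult_left_mono) simp
    then show ?thesis using p(2) by linarith
  qed
  have nonneg: "0 \<le> real N * real M * z" "0 \<le> 2 * real N * real M * exp (- (\<eta> / (10 * real M)) * T')"
    by (simp_all add: z_def)
  from chernoff_exponent_ge[OF \<eta> NM(2) T] show ?thesis
  proof
    assume "\<eta> / (10 * real M) * T' \<le> T * (1 - exp (- \<eta>)) / (3 * real M)"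
    then have "p \<le> 2 * real N * real M * exp (- (\<eta> / (10 * real M)) * T')" using p_le by fastforce
    then show ?thesis using nonneg unfolding z_def by linarith
  next
    assume "T' / (36 * real M ^ 2) * 2 \<le> T * (1 - exp (- \<eta>)) / (3 * real M)"
    then have "p \<le> 2 * real N * real M * exp (- (T' / (36 * real M ^ 2) * 2))" by (rule p_le)
    also have "exp (- (T' / (36 * real M ^ 2) * 2)) = z\<^sup>2"
      by (simp add: z_def power2_eq_square mult_exp_exp)
    finally have "p \<le> 2 * (real N * real M) * z\<^sup>2" by (simp add: mult.assoc)
    moreover have "2 \<le> real N * real M" using NM mult_mono[of 1 "real N" 2 "real M"] by simp
    ultimately have "p \<le> real N * real M * z"
      using le_of_le_twice_square[OF _ p(1)] z_def by simp
    then show ?thesis using nonneg unfolding z_def by linarith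
  qed
qed

text \<open>Pair \<open>j\<close> with \<open>k + 1 - j\<close>: one of the two is at least \<open>k / 2\<close>.\<close>

lemma sum_powr_ge:
  assumes "0 < \<delta>"
  shows "real k * (real k / 2) powr \<delta> / 2 \<le> (\<Sum>j=1..k. real j powr \<delta>)"
proof -
  have "(\<Sum>j=1..k. (real k / 2) powr \<delta>) \<le> (\<Sum>j=1..k. real j powr \<delta> + real (k + 1 - j) powr \<delta>)"
  proof (rule sum_mono)
    fix j assume "j \<in> {1..k}"
    then consider "real k / 2 \<le> real j" | "real k / 2 \<le> real (k + 1 - j)" by linarith
    then show "(real k / 2) powr \<delta> \<le> real j powr \<delta> + real (k + 1 - j) powr \<delta>"
    proof cases
      case 1
      then have "(real k / 2) powr \<delta> \<le> real j powr \<delta>" using assms by (intro powr_mono2) auto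
      then show ?thesis using powr_ge_zero[of "real (k + 1 - j)" \<delta>] by linarith
    next
      case 2
      then have "(real k / 2) powr \<delta> \<le> real (k + 1 - j) powr \<delta>" using assms by (intro powr_mono2) auto
      then show ?thesis using powr_ge_zero[of "real j" \<delta>] by linarith
    qed
  qed
  also have "\<dots> = 2 * (\<Sum>j=1..k. real j powr \<delta>)"
  proof -
    have "(\<Sum>j=1..k. real (k + 1 - j) powr \<delta>) = (\<Sum>j=1..k. real j powr \<delta>)"
      by (rule sum.atLeastAtMost_rev[symmetric])
    then show ?thesis by (simp add: sum.distrib)
  qed
  finally show ?thesis by simp
qed

lemma explore_turns_ge:
  assumes "0 < c1" "0 < \<delta>"
  shows "c1 * (real k / 2) powr \<delta> * real k / 2 \<le> real (explore_turns c1 \<delta> k)"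
proof -
  have "c1 * (real k / 2) powr \<delta> * real k / 2 = c1 * (real k * (real k / 2) powr \<delta> / 2)" by simp
  also have "\<dots> \<le> c1 * (\<Sum>j=1..k. real j powr \<delta>)"
    using sum_powr_ge[OF assms(2)] assms(1) by (intro mult_left_mono) auto
  also have "\<dots> \<le> real (explore_turns c1 \<delta> k)"
    unfolding explore_turns_def by linarith
  finally show ?thesis .
qed

lemma sum_power_diff_le:
  fixes x :: real
  assumes x: "0 \<le> x" "x < 1" and "q \<le> k"
  shows "(\<Sum>rr\<in>{0..q}. x ^ (k - rr)) \<le> x ^ (k - q) / (1 - x)"
proof -
  have "(\<Sum>rr\<in>{0..q}. x ^ (k - rr)) = (\<Sum>i\<in>{0..q}. x ^ (k - (q + 0 - i)))"
    by (rule sum.atLeastAtMost_rev)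
  also have "\<dots> = (\<Sum>i\<in>{0..q}. x ^ (k - q) * x ^ i)"
    using \<open>q \<le> k\<close> by (intro sum.cong) (auto simp: power_add[symmetric])
  also have "\<dots> = x ^ (k - q) * (\<Sum>i<Suc q. x ^ i)"
    by (simp add: sum_distrib_left atLeast0AtMost lessThan_Suc_atMost)
  also have "\<dots> \<le> x ^ (k - q) * (1 / (1 - x))"
    using x sum_le_suminf[OF summable_geometric, of x "{..<Suc q}"] suminf_geometric[of x]
    by (intro mult_left_mono) auto
  finally show ?thesis by simp
qed

lemma sum_exp_epoch_tail_le:
  assumes u: "0 < u" and \<delta>: "0 < \<delta>" and k: "1 \<le> k"
  shows "(\<Sum>rr\<in>{0..k div 2}. exp (- u * (real (k - rr) / 2) powr \<delta> * real (k - rr)))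
         \<le> exp (- (u / 2) * (real k / 4) powr \<delta> * real k) / (1 - exp (- u * (real k / 4) powr \<delta>))"
proof -
  define \<alpha> where "\<alpha> = u * (real k / 4) powr \<delta>"
  have \<alpha>: "0 < \<alpha>" using u k by (simp add: \<alpha>_def)
  have "exp (- u * (real (k - rr) / 2) powr \<delta> * real (k - rr)) \<le> exp (- \<alpha>) ^ (k - rr)"
    if "rr \<in> {0..k div 2}" for rr
  proof -
    have "(real k / 4) powr \<delta> \<le> (real (k - rr) / 2) powr \<delta>"
      using that \<delta> by (intro powr_mono2) (auto simp: of_nat_diff)
    then have "\<alpha> * real (k - rr) \<le> u * (real (k - rr) / 2) powr \<delta> * real (k - rr)"
      unfolding \<alpha>_def using u by (intro mult_right_mono mult_left_mono) auto
    then show ?thesis by (simp add: exp_of_nat_mult[symmetric] mult.commute)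
  qed
  then have "(\<Sum>rr\<in>{0..k div 2}. exp (- u * (real (k - rr) / 2) powr \<delta> * real (k - rr)))
             \<le> (\<Sum>rr\<in>{0..k div 2}. exp (- \<alpha>) ^ (k - rr))"
    by (rule sum_mono)
  also have "\<dots> \<le> exp (- \<alpha>) ^ (k - k div 2) / (1 - exp (- \<alpha>))"
    using \<alpha> by (intro sum_power_diff_le) auto
  also have "\<dots> \<le> exp (- \<alpha> * real k / 2) / (1 - exp (- \<alpha>))"
  proof (rule divide_right_mono)
    have "\<alpha> * real k / 2 \<le> real (k - k div 2) * \<alpha>"
      using \<alpha> by (simp add: of_nat_diff)
    then show "exp (- \<alpha>) ^ (k - k div 2) \<le> exp (- \<alpha> * real k / 2)"
      by (simp add: exp_of_nat_mult[symmetric])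
  qed (use \<alpha> in simp)
  also have "\<dots> = exp (- (u / 2) * (real k / 4) powr \<delta> * real k) / (1 - exp (- u * (real k / 4) powr \<delta>))"
    by (simp add: \<alpha>_def)
  finally show ?thesis .
qed

definition bernstein_exponent :: "real \<Rightarrow> real \<Rightarrow> real \<Rightarrow> real" where
  "bernstein_exponent v c x = x\<^sup>2 / (2 * (v + c * x))"

lemma bernstein_exponent_antimono:
  assumes "0 < x" "0 < v + c * x" "v \<le> v'" "c \<le> c'"
  shows "bernstein_exponent v' c' x \<le> bernstein_exponent v c x"
proof -
  have "v + c * x \<le> v' + c' * x" using assms by (intro add_mono mult_right_mono) auto
  then show ?thesis
    unfolding bernstein_exponent_def using assms by (intro divide_left_mono) (auto intro!: mult_pos_pos)
qed

text \<open>The constants \<open>80\<close> and \<open>40\<close> in the rate \<open>w\<close> of the theorem come from this identity.\<close>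

lemma gap_rate_eq_bernstein_exponent:
  fixes \<Delta> S B :: real and N M :: nat
  assumes N_M: "0 < N" "0 < M" and pos: "0 < S\<^sup>2 + B * (\<Delta> / (2 * N))"
  shows "\<Delta>\<^sup>2 / (real M * real N ^ 2 * (80 * S\<^sup>2 + 40 * B / real N * \<Delta>))
         = bernstein_exponent (S\<^sup>2) B (\<Delta> / (2 * N)) / (10 * real M)"
proof -
  define x where "x = \<Delta> / (2 * N)"
  define D where "D = S\<^sup>2 + B * x"
  have "80 * S\<^sup>2 + 40 * B / real N * \<Delta> = 80 * D" "\<Delta>\<^sup>2 = 4 * real N ^ 2 * x\<^sup>2"
    using N_M by (simp_all add: D_def x_def field_simps power2_eq_square)
  moreover have "bernstein_exponent (S\<^sup>2) B x = x\<^sup>2 / (2 * D)" by (simp add: D_def bernstein_exponent_def)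
  moreover have "0 < D" using pos by (simp add: D_def x_def)
  ultimately show ?thesis unfolding x_def[symmetric] using N_M by (simp add: field_simps)
qed

section \<open>Moment generating functions and independence\<close>

lemma (in prob_space) abs_moment_term_le:
  fixes X :: "'a \<Rightarrow> real"
  assumes var: "integrable M (\<lambda>\<omega>. (X \<omega>)\<^sup>2)" "expectation (\<lambda>\<omega>. (X \<omega>)\<^sup>2) = v"
    and moments: "\<And>j. 3 \<le> j \<Longrightarrow> integrable M (\<lambda>\<omega>. \<bar>X \<omega>\<bar> ^ j) \<and>
                          expectation (\<lambda>\<omega>. \<bar>X \<omega>\<bar> ^ j) \<le> 1/2 * fact j * v * b ^ (j - 2)"
    and l: "0 \<le> l"
  shows "integrable M (\<lambda>\<omega>. \<bar>l * X \<omega>\<bar> ^ (j + 2) / fact (j + 2))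
         \<and> expectation (\<lambda>\<omega>. \<bar>l * X \<omega>\<bar> ^ (j + 2) / fact (j + 2)) \<le> l\<^sup>2 * v / 2 * (l * b) ^ j"
proof -
  have term_eq: "(\<lambda>\<omega>. \<bar>l * X \<omega>\<bar> ^ (j + 2) / fact (j + 2)) = (\<lambda>\<omega>. (l ^ (j + 2) / fact (j + 2)) * \<bar>X \<omega>\<bar> ^ (j + 2))"
    using l by (simp add: fun_eq_iff power_mult_distrib abs_mult)
  show ?thesis
  proof (cases "j = 0")
    case True
    have "(\<lambda>\<omega>. \<bar>l * X \<omega>\<bar> ^ (j + 2) / fact (j + 2)) = (\<lambda>\<omega>. l\<^sup>2 / 2 * (X \<omega>)\<^sup>2)"
      using True by (simp add: fun_eq_iff power2_eq_square)
    then show ?thesis using True var by simp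
  next
    case False
    then have int: "integrable M (\<lambda>\<omega>. \<bar>X \<omega>\<bar> ^ (j + 2))"
      and moment: "expectation (\<lambda>\<omega>. \<bar>X \<omega>\<bar> ^ (j + 2)) \<le> 1/2 * fact (j + 2) * v * b ^ j"
      using moments[of "j + 2"] by auto
    have "expectation (\<lambda>\<omega>. (l ^ (j + 2) / fact (j + 2)) * \<bar>X \<omega>\<bar> ^ (j + 2))
          = l ^ (j + 2) / fact (j + 2) * expectation (\<lambda>\<omega>. \<bar>X \<omega>\<bar> ^ (j + 2))"
      by simp
    also have "\<dots> \<le> l ^ (j + 2) / fact (j + 2) * (1/2 * fact (j + 2) * v * b ^ j)"
      by (rule mult_left_mono[OF moment]) (use l in simp)
    also have "\<dots> = l\<^sup>2 * v / 2 * (l * b) ^ j"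
      by (simp add: power_add power_mult_distrib power2_eq_square)
    finally show ?thesis
      unfolding term_eq using integrable_mult_right[OF int] by blast
  qed
qed

lemma (in prob_space) abs_moment_series_le:
  fixes X :: "'a \<Rightarrow> real"
  assumes var: "integrable M (\<lambda>\<omega>. (X \<omega>)\<^sup>2)" "expectation (\<lambda>\<omega>. (X \<omega>)\<^sup>2) = v"
    and moments: "\<And>j. 3 \<le> j \<Longrightarrow> integrable M (\<lambda>\<omega>. \<bar>X \<omega>\<bar> ^ j) \<and>
                          expectation (\<lambda>\<omega>. \<bar>X \<omega>\<bar> ^ j) \<le> 1/2 * fact j * v * b ^ (j - 2)"
    and l: "0 \<le> l" "0 \<le> b" "l * b < 1"
  shows "integrable M (\<lambda>\<omega>. \<Sum>j. \<bar>l * X \<omega>\<bar> ^ (j + 2) / fact (j + 2))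
         \<and> expectation (\<lambda>\<omega>. \<Sum>j. \<bar>l * X \<omega>\<bar> ^ (j + 2) / fact (j + 2)) \<le> l\<^sup>2 * v / (2 * (1 - l * b))"
proof -
  define f where "f j \<omega> = \<bar>l * X \<omega>\<bar> ^ (j + 2) / fact (j + 2)" for j \<omega>
  have f_moment: "integrable M (f j) \<and> expectation (f j) \<le> l\<^sup>2 * v / 2 * (l * b) ^ j" for j
    unfolding f_def[abs_def] using abs_moment_term_le[OF var moments l(1)] by blast
  have geo: "(\<lambda>j. l\<^sup>2 * v / 2 * (l * b) ^ j) sums (l\<^sup>2 * v / 2 * (1 / (1 - l * b)))"
    using l by (intro sums_mult geometric_sums) simp
  have f_int: "integrable M (f j)" for j using f_moment by blast
  have f_summable: "AE \<omega> in M. summable (\<lambda>j. norm (f j \<omega>))"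
    using sums_abs_power_tail by (simp add: f_def sums_iff)
  have f_nonneg: "0 \<le> f j \<omega>" for j \<omega> by (simp add: f_def)
  have "summable (\<lambda>j. expectation (\<lambda>\<omega>. norm (f j \<omega>)))"
    using f_moment f_nonneg by (intro summable_comparison_test[OF _ sums_summable[OF geo]])
      (auto simp: integral_nonneg abs_of_nonneg)
  then have "integrable M (\<lambda>\<omega>. \<Sum>j. f j \<omega>)"
    and "expectation (\<lambda>\<omega>. \<Sum>j. f j \<omega>) = (\<Sum>j. expectation (f j))"
    and "summable (\<lambda>j. expectation (f j))"
    using integrable_suminf[OF f_int f_summable] integral_suminf[OF f_int f_summable]
      summable_integral[OF f_int f_summable] by auto
  then show ?thesis
    using suminf_le[OF _ _ sums_summable[OF geo]] f_moment sums_unique[OF geo] by (simp add: f_def)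
qed

lemma (in prob_space) bernstein_mgf_le:
  fixes X :: "'a \<Rightarrow> real"
  assumes X: "integrable M X" "expectation X = 0"
    and var: "integrable M (\<lambda>\<omega>. (X \<omega>)\<^sup>2)" "expectation (\<lambda>\<omega>. (X \<omega>)\<^sup>2) = v"
    and moments: "\<And>j. 3 \<le> j \<Longrightarrow> integrable M (\<lambda>\<omega>. \<bar>X \<omega>\<bar> ^ j) \<and>
                          expectation (\<lambda>\<omega>. \<bar>X \<omega>\<bar> ^ j) \<le> 1/2 * fact j * v * b ^ (j - 2)"
    and l: "0 \<le> l" "0 \<le> b" "l * b < 1"
  shows "integrable M (\<lambda>\<omega>. exp (l * X \<omega>))
         \<and> expectation (\<lambda>\<omega>. exp (l * X \<omega>)) \<le> 1 + l\<^sup>2 * v / (2 * (1 - l * b))"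
proof -
  define tail where "tail \<omega> = (\<Sum>j. \<bar>l * X \<omega>\<bar> ^ (j + 2) / fact (j + 2))" for \<omega>
  have tail: "integrable M tail" "expectation tail \<le> l\<^sup>2 * v / (2 * (1 - l * b))"
    using abs_moment_series_le[OF var moments l] unfolding tail_def[abs_def] by auto
  have exp_le: "exp (l * X \<omega>) \<le> 1 + l * X \<omega> + tail \<omega>" for \<omega>
    unfolding tail_def by (rule exp_le_one_plus_abs_tail)
  have bound_int: "integrable M (\<lambda>\<omega>. 1 + l * X \<omega> + tail \<omega>)"
    using tail X by auto
  have exp_int: "integrable M (\<lambda>\<omega>. exp (l * X \<omega>))"
    using exp_le borel_measurable_integrable[OF X(1)]
    by (intro Bochner_Integration.integrable_bound[OF bound_int]) (auto intro!: AE_I2 order_trans[OF _ abs_ge_self])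
  have "expectation (\<lambda>\<omega>. exp (l * X \<omega>)) \<le> expectation (\<lambda>\<omega>. 1 + l * X \<omega> + tail \<omega>)"
    by (rule integral_mono[OF exp_int bound_int exp_le])
  also have "\<dots> = 1 + expectation tail"
    using tail X by (simp add: prob_space)
  finally show ?thesis using exp_int tail by simp
qed

lemma (in prob_space) prob_sum_nonneg_le_mgf_power:
  fixes Z :: "'t \<Rightarrow> 'a \<Rightarrow> real"
  assumes I: "finite I" and indep: "indep_vars (\<lambda>_. borel) (\<lambda>t \<omega>. exp (l * Z t \<omega>)) I"
    and Z: "\<And>t. t \<in> I \<Longrightarrow> Z t \<in> borel_measurable M"
    and mgf: "\<And>t. t \<in> I \<Longrightarrow> integrable M (\<lambda>\<omega>. exp (l * Z t \<omega>))
                                \<and> expectation (\<lambda>\<omega>. exp (l * Z t \<omega>)) \<le> c"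
    and l: "0 \<le> l"
  shows "prob {\<omega> \<in> space M. 0 \<le> (\<Sum>t\<in>I. Z t \<omega>)} \<le> c ^ card I"
proof -
  let ?E = "{\<omega> \<in> space M. 0 \<le> (\<Sum>t\<in>I. Z t \<omega>)}"
  have E: "?E \<in> events" using Z I by measurable
  have prod_int: "integrable M (\<lambda>\<omega>. \<Prod>t\<in>I. exp (l * Z t \<omega>))"
    using indep_vars_integrable[OF I indep] mgf by simp
  have indicator_le: "indicator ?E \<omega> \<le> (\<Prod>t\<in>I. exp (l * Z t \<omega>))" for \<omega>
  proof (cases "\<omega> \<in> ?E")
    case True
    then have "1 \<le> exp (l * (\<Sum>t\<in>I. Z t \<omega>))" using l by simp
    then show ?thesis using True I by (simp add: sum_distrib_left exp_sum)
  qed (simp add: prod_nonneg)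
  have "prob ?E = expectation (indicator ?E)" using E by simp
  also have "\<dots> \<le> expectation (\<lambda>\<omega>. \<Prod>t\<in>I. exp (l * Z t \<omega>))"
    using E by (intro integral_mono[OF _ prod_int indicator_le]) (simp add: integrable_indicator_iff less_top[symmetric])
  also have "\<dots> = (\<Prod>t\<in>I. expectation (\<lambda>\<omega>. exp (l * Z t \<omega>)))"
    using indep_vars_lebesgue_integral[OF I indep] mgf by simp
  also have "\<dots> \<le> (\<Prod>t\<in>I. c)"
    using mgf by (intro prod_mono) (auto intro: integral_nonneg)
  finally show ?thesis by simp
qed

lemma (in prob_space) expectation_switched_le:
  fixes S F :: "'a \<Rightarrow> real"
  assumes indep: "indep_var borel S borel F"
    and S: "S \<in> borel_measurable M" "\<And>\<omega>. S \<omega> \<in> {0, 1}" "q \<le> expectation S" "0 \<le> q"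
    and F: "integrable M F" "expectation F \<le> m" "m \<le> 1"
  shows "integrable M (\<lambda>\<omega>. 1 - S \<omega> + S \<omega> * F \<omega>)
         \<and> expectation (\<lambda>\<omega>. 1 - S \<omega> + S \<omega> * F \<omega>) \<le> 1 - q * (1 - m)"
proof -
  have S_int: "integrable M S"
  proof (rule integrable_const_bound[where B=1])
    have "\<bar>S \<omega>\<bar> \<le> 1" for \<omega> using S(2)[of \<omega>] by auto
    then show "AE \<omega> in M. norm (S \<omega>) \<le> 1" by simp
  qed (rule S(1))
  have SF: "integrable M (\<lambda>\<omega>. S \<omega> * F \<omega>)" "expectation (\<lambda>\<omega>. S \<omega> * F \<omega>) = expectation S * expectation F"
    using indep_var_integrable[OF indep S_int F(1)] indep_var_lebesgue_integral[OF indep S_int F(1)] by auto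
  have "expectation (\<lambda>\<omega>. 1 - S \<omega> + S \<omega> * F \<omega>) = 1 - expectation S * (1 - expectation F)"
    using S_int SF by (simp add: prob_space algebra_simps)
  also have "\<dots> \<le> 1 - q * (1 - m)"
    using S F by (intro diff_left_mono mult_mono) auto
  finally show ?thesis using S_int SF by simp
qed

lemma (in prob_space) indep_vars_of_disjoint_coordinates:
  assumes indep: "indep_vars (\<lambda>_. borel) X I"
    and K: "\<And>j. j \<in> J \<Longrightarrow> K j \<subseteq> I" "disjoint_family_on K J"
    and g: "\<And>j. j \<in> J \<Longrightarrow> g j \<in> borel_measurable (PiM (K j) (\<lambda>_. borel))"
  shows "indep_vars (\<lambda>_. borel) (\<lambda>j \<omega>. g j (restrict (\<lambda>i. X i \<omega>) (K j))) J"
  by (rule indep_vars_compose2[OF indep_vars_restrict[OF indep K] g])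

lemma measurable_PiM_component_comp:
  assumes "j \<in> K" "h \<in> borel_measurable borel"
  shows "(\<lambda>f. h (f j)) \<in> borel_measurable (PiM K (\<lambda>_. borel))"
  using measurable_compose[OF measurable_component_singleton[OF assms(1)] assms(2)] by simp

lemma borel_measurable_of_bool_eq_iff: "(\<lambda>y::real. of_bool (y = c \<longleftrightarrow> Q) :: real) \<in> borel_measurable borel"
  by (cases Q) simp_all

section \<open>Solo turns, empirical means and the objective\<close>

definition solo :: "nat \<Rightarrow> (nat \<Rightarrow> nat \<Rightarrow> 'a \<Rightarrow> nat) \<Rightarrow> nat \<Rightarrow> nat \<Rightarrow> nat \<Rightarrow> 'a \<Rightarrow> bool" where
  "solo N A t n i \<omega> \<longleftrightarrow> A t n \<omega> = i \<and> (\<forall>m<N. m \<noteq> n \<longrightarrow> A t m \<omega> \<noteq> i)"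

lemma of_bool_solo_eq_prod:
  assumes "n < N"
  shows "of_bool (solo N A t n i \<omega>) = (\<Prod>m<N. of_bool (A t m \<omega> = i \<longleftrightarrow> m = n) :: real)"
proof (cases "solo N A t n i \<omega>")
  case True
  have "(\<Prod>m<N. of_bool (A t m \<omega> = i \<longleftrightarrow> m = n) :: real) = 1"
    by (rule prod.neutral) (use True in \<open>auto simp: solo_def\<close>)
  then show ?thesis using True by simp
next
  case False
  then obtain m where "m < N" "\<not> (A t m \<omega> = i \<longleftrightarrow> m = n)"
    using assms by (auto simp: solo_def)
  then have "(\<Prod>m<N. of_bool (A t m \<omega> = i \<longleftrightarrow> m = n) :: real) = 0"
    by (intro prod_zero) auto
  then show ?thesis using False by simp
qed

lemma sum_solo_turns:
  fixes f :: "nat \<Rightarrow> real"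
  shows "(\<Sum>t\<in>{1..T}. of_bool (solo N A t n i \<omega>) * f t) = (\<Sum>t\<in>solo_turns N A T n i \<omega>. f t)"
proof -
  have "(\<Sum>t\<in>{1..T}. of_bool (solo N A t n i \<omega>) * f t) = (\<Sum>t\<in>{1..T}. if solo N A t n i \<omega> then f t else 0)"
    by (intro sum.cong) auto
  also have "\<dots> = (\<Sum>t\<in>{t \<in> {1..T}. solo N A t n i \<omega>}. f t)"
    by (rule sum.inter_filter[symmetric]) simp
  finally show ?thesis by (simp add: solo_turns_def solo_def)
qed

lemma abs_mean_diff_less:
  fixes f :: "'t \<Rightarrow> real"
  assumes S: "finite S" and dev: "\<And>s. s \<in> {1, -1} \<Longrightarrow> (\<Sum>t\<in>S. s * (f t - c) - x) < 0"
  shows "\<bar>(\<Sum>t\<in>S. f t) / real (card S) - c\<bar> < x"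
proof -
  have upper: "(\<Sum>t\<in>S. f t) < real (card S) * (c + x)"
    using dev[of 1] by (simp add: sum_subtractf sum.distrib algebra_simps)
  have lower: "real (card S) * (c - x) < (\<Sum>t\<in>S. f t)"
    using dev[of "-1"] by (simp add: sum_subtractf sum_negf sum.distrib algebra_simps)
  have "S \<noteq> {}" using dev[of 1] by auto
  then have "0 < real (card S)" using S by (simp add: card_gt_0_iff)
  then show ?thesis using upper lower by (simp add: abs_less_iff field_simps)
qed

lemma abs_objective_diff_less:
  assumes close: "\<And>n i. n < N \<Longrightarrow> i < M \<Longrightarrow> \<bar>e n i - mu n i\<bar> < x"
    and a: "a \<in> profiles N M" and N: "1 \<le> N"
  shows "\<bar>objective N e a - objective N mu a\<bar> < real N * x"
proof -
  have "\<bar>objective N e a - objective N mu a\<bar> = \<bar>\<Sum>n<N. (e n (a n) - mu n (a n)) * eta N a (a n)\<bar>"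
    by (simp add: objective_def sum_subtractf[symmetric] left_diff_distrib)
  also have "\<dots> \<le> (\<Sum>n<N. \<bar>(e n (a n) - mu n (a n)) * eta N a (a n)\<bar>)"
    by (rule sum_abs)
  also have "\<dots> < (\<Sum>n<N. x)"
  proof (rule sum_strict_mono)
    fix n assume "n \<in> {..<N}"
    moreover have "a n < M" if "n < N" using a that by (auto simp: profiles_def)
    ultimately show "\<bar>(e n (a n) - mu n (a n)) * eta N a (a n)\<bar> < x"
      using close[of n "a n"] by (auto simp: eta_def abs_mult)
  qed (use N in \<open>auto simp: lessThan_empty_iff\<close>)
  finally show ?thesis by simp
qed

lemma objective_lt_of_close:
  assumes gap: "objective N mu a + \<Delta> \<le> objective N mu a'"
    and close: "\<And>n i. n < N \<Longrightarrow> i < M \<Longrightarrow> \<bar>e n i - mu n i\<bar> < \<Delta> / (2 * N)"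
    and profiles: "a \<in> profiles N M" "a' \<in> profiles N M" and N: "1 \<le> N"
  shows "objective N e a < objective N e a'"
proof -
  have "real N * (\<Delta> / (2 * N)) = \<Delta> / 2" using N by simp
  then show ?thesis
    using abs_objective_diff_less[of N M e mu "\<Delta> / (2 * N)", OF close profiles(1) N]
      abs_objective_diff_less[of N M e mu "\<Delta> / (2 * N)", OF close profiles(2) N] gap
    unfolding abs_less_iff by linarith
qed

lemma finite_objective_values: "finite {objective N mu a | a. a \<in> profiles N M \<and> Q a}"
proof (rule finite_subset)
  show "{objective N mu a | a. a \<in> profiles N M \<and> Q a} \<subseteq> objective N mu ` profiles N M" by auto
qed (simp add: profiles_def finite_PiE)

lemma J1_eq_objective_of_unique_max:
  assumes astar: "astar \<in> profiles N M"
    and unique: "\<And>a. a \<in> profiles N M \<Longrightarrow> a \<noteq> astar \<Longrightarrow> objective N mu a < objective N mu astar"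
  shows "J1 N M mu = objective N mu astar"
  unfolding J1_def
proof (rule Max_eqI)
  show "finite (objective N mu ` profiles N M)" by (simp add: profiles_def finite_PiE)
  show "y \<le> objective N mu astar" if "y \<in> objective N mu ` profiles N M" for y
    using that unique by (cases "y = objective N mu astar") force+
qed (use astar in simp)

lemma objective_le_J2:
  assumes J1: "J1 N M mu = objective N mu astar"
    and unique: "\<And>a. a \<in> profiles N M \<Longrightarrow> a \<noteq> astar \<Longrightarrow> objective N mu a < objective N mu astar"
    and a: "a \<in> profiles N M" "a \<noteq> astar"
  shows "objective N mu a \<le> J2 N M mu"
  unfolding J2_def using J1 unique a by (intro Max_ge finite_objective_values) auto

lemma J2_lt_J1:
  assumes "\<exists>a \<in> profiles N M. objective N mu a < J1 N M mu"
  shows "J2 N M mu < J1 N M mu"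
proof -
  let ?S = "{objective N mu a | a. a \<in> profiles N M \<and> objective N mu a < J1 N M mu}"
  have "?S \<noteq> {}" using assms by auto
  then have "J2 N M mu \<in> ?S" unfolding J2_def by (intro Max_in finite_objective_values)
  then show ?thesis by auto
qed

lemma two_le_arms_of_profiles_ne:
  assumes "a \<in> profiles N M" "a' \<in> profiles N M" "a \<noteq> a'"
  shows "2 \<le> M"
proof (rule ccontr)
  assume "\<not> 2 \<le> M"
  moreover have "a n < M" "a' n < M" if "n \<in> {0..<N}" for n
    using assms(1,2) that by (auto simp: profiles_def)
  ultimately have "a n = a' n" if "n \<in> {0..<N}" for n
    using that by fastforce
  then have "a = a'" using assms(1,2) unfolding profiles_def by (metis PiE_ext)
  then show False using assms(3) by contradiction
qed

lemma second_best_gap: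
  assumes astar: "astar \<in> profiles N M"
    and unique: "\<And>a. a \<in> profiles N M \<Longrightarrow> a \<noteq> astar \<Longrightarrow> objective N mu a < objective N mu astar"
    and second: "\<exists>a \<in> profiles N M. objective N mu a < J1 N M mu"
  shows "0 < J1 N M mu - J2 N M mu" and "2 \<le> M"
    and "\<And>a. a \<in> profiles N M \<Longrightarrow> a \<noteq> astar
           \<Longrightarrow> objective N mu a + (J1 N M mu - J2 N M mu) \<le> objective N mu astar"
proof -
  have J1: "J1 N M mu = objective N mu astar"
    by (rule J1_eq_objective_of_unique_max[OF astar unique])
  show "0 < J1 N M mu - J2 N M mu" using J2_lt_J1[OF second] by simp
  obtain a' where "a' \<in> profiles N M" "objective N mu a' < objective N mu astar"
    using second J1 by auto
  then show "2 \<le> M" using two_le_arms_of_profiles_ne[OF _ astar] by blast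
  show "objective N mu a + (J1 N M mu - J2 N M mu) \<le> objective N mu astar"
    if "a \<in> profiles N M" "a \<noteq> astar" for a
    using objective_le_J2[OF J1 unique that] J1 by simp
qed

lemma le_Max_grid:
  fixes f :: "nat \<Rightarrow> nat \<Rightarrow> real"
  assumes "n < N" "i < M"
  shows "f n i \<le> Max {f n i | n i. n < N \<and> i < M}"
proof (rule Max_ge)
  have "{f n i | n i. n < N \<and> i < M} = (\<lambda>(n, i). f n i) ` ({..<N} \<times> {..<M})" by auto
  then show "finite {f n i | n i. n < N \<and> i < M}" by simp
qed (use assms in auto)

section \<open>The exploration phase\<close>

text \<open>All rewards and arm choices as one family of real random variables, indexed so that its
  mutual independence is exactly the independence hypothesis of the theorem.\<close>

definition bandit_var :: "(nat \<Rightarrow> nat \<Rightarrow> nat \<Rightarrow> 'a \<Rightarrow> real) \<Rightarrow> (nat \<Rightarrow> nat \<Rightarrow> 'a \<Rightarrow> nat)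
    \<Rightarrow> (nat \<times> nat \<times> nat) + (nat \<times> nat) \<Rightarrow> 'a \<Rightarrow> real" where
  "bandit_var r A x = (case x of Inl (n, i, t) \<Rightarrow> r n i t | Inr (t, n) \<Rightarrow> (\<lambda>\<omega>. real (A t n \<omega>)))"

definition bandit_index :: "nat \<Rightarrow> nat \<Rightarrow> ((nat \<times> nat \<times> nat) + (nat \<times> nat)) set" where
  "bandit_index N M = {Inl (n, i, t) | n i t. n < N \<and> i < M \<and> 1 \<le> t} \<union> {Inr (t, n) | t n. 1 \<le> t \<and> n < N}"

definition solo_coordinates :: "nat \<Rightarrow> nat \<Rightarrow> nat \<Rightarrow> nat \<Rightarrow> ((nat \<times> nat \<times> nat) + (nat \<times> nat) \<Rightarrow> real) \<Rightarrow> real" where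
  "solo_coordinates N t n i f = (\<Prod>m<N. of_bool (f (Inr (t, m)) = real i \<longleftrightarrow> m = n))"

lemma solo_coordinates_restrict:
  assumes "n < N" "\<And>m. m < N \<Longrightarrow> Inr (t, m) \<in> K"
  shows "solo_coordinates N t n i (restrict (\<lambda>j. bandit_var r A j \<omega>) K) = of_bool (solo N A t n i \<omega>)"
  using assms by (simp add: solo_coordinates_def of_bool_solo_eq_prod bandit_var_def)

lemma measurable_solo_coordinates:
  assumes "\<And>m. m < N \<Longrightarrow> Inr (t, m) \<in> K"
  shows "solo_coordinates N t n i \<in> borel_measurable (PiM K (\<lambda>_. borel))"
  unfolding solo_coordinates_def using assms
  by (intro borel_measurable_prod measurable_PiM_component_comp borel_measurable_of_bool_eq_iff) auto

locale bandit_exploration = prob_space P for P :: "'a measure" +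
  fixes N M :: nat and r :: "nat \<Rightarrow> nat \<Rightarrow> nat \<Rightarrow> 'a \<Rightarrow> real" and A :: "nat \<Rightarrow> nat \<Rightarrow> 'a \<Rightarrow> nat"
    and mu \<sigma> b :: "nat \<Rightarrow> nat \<Rightarrow> real"
  assumes N_pos: "1 \<le> N" and N_le_M: "N \<le> M"
    and r_mean: "\<And>n i t. n < N \<Longrightarrow> i < M \<Longrightarrow> 1 \<le> t \<Longrightarrow>
                 integrable P (r n i t) \<and> expectation (r n i t) = mu n i"
    and r_var: "\<And>n i t. n < N \<Longrightarrow> i < M \<Longrightarrow> 1 \<le> t \<Longrightarrow>
                 integrable P (\<lambda>\<omega>. (r n i t \<omega> - mu n i)\<^sup>2) \<and>
                 expectation (\<lambda>\<omega>. (r n i t \<omega> - mu n i)\<^sup>2) = (\<sigma> n i)\<^sup>2"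
    and \<sigma>_nonneg: "\<And>n i. n < N \<Longrightarrow> i < M \<Longrightarrow> 0 \<le> \<sigma> n i"
    and r_cont: "\<And>n i t x. n < N \<Longrightarrow> i < M \<Longrightarrow> 1 \<le> t \<Longrightarrow> prob {\<omega> \<in> space P. r n i t \<omega> = x} = 0"
    and b_pos: "\<And>n i. n < N \<Longrightarrow> i < M \<Longrightarrow> 0 < b n i"
    and bernstein: "\<And>n i t j. n < N \<Longrightarrow> i < M \<Longrightarrow> 1 \<le> t \<Longrightarrow> 3 \<le> j \<Longrightarrow>
                 integrable P (\<lambda>\<omega>. \<bar>r n i t \<omega> - mu n i\<bar> ^ j) \<and>
                 expectation (\<lambda>\<omega>. \<bar>r n i t \<omega> - mu n i\<bar> ^ j) \<le> 1/2 * fact j * (\<sigma> n i)\<^sup>2 * (b n i) ^ (j - 2)"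
    and A_rv: "\<And>t n. 1 \<le> t \<Longrightarrow> n < N \<Longrightarrow> A t n \<in> measurable P (count_space UNIV)"
    and A_unif: "\<And>t n i. 1 \<le> t \<Longrightarrow> n < N \<Longrightarrow> i < M \<Longrightarrow> prob {\<omega> \<in> space P. A t n \<omega> = i} = 1 / real M"
    and indep: "indep_vars (\<lambda>_. borel) (bandit_var r A) (bandit_index N M)"
begin

lemma variance_pos:
  assumes ni: "n < N" "i < M"
  shows "0 < (\<sigma> n i)\<^sup>2"
proof (rule ccontr)
  assume "\<not> 0 < (\<sigma> n i)\<^sup>2"
  then have "(\<sigma> n i)\<^sup>2 = 0" by (simp add: not_less)
  then have int: "integrable P (\<lambda>\<omega>. (r n i 1 \<omega> - mu n i)\<^sup>2)"
    and "expectation (\<lambda>\<omega>. (r n i 1 \<omega> - mu n i)\<^sup>2) = 0"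
    using r_var[OF ni, of 1] by simp_all
  then have "AE \<omega> in P. (r n i 1 \<omega> - mu n i)\<^sup>2 = 0"
    using integral_nonneg_eq_0_iff_AE[OF int] by simp
  then have "AE \<omega> in P. r n i 1 \<omega> = mu n i" by simp
  moreover have "r n i 1 \<in> borel_measurable P"
    using r_mean[OF ni, of 1] by (simp add: borel_measurable_integrable)
  then have "{\<omega> \<in> space P. r n i 1 \<omega> = mu n i} \<in> events" by measurable
  ultimately have "prob {\<omega> \<in> space P. r n i 1 \<omega> = mu n i} = 1"
    using prob_Collect_eq_1 by simp
  then show False using r_cont[OF ni, of 1 "mu n i"] by simp
qed

lemma choice_measurable:
  assumes "1 \<le> t" "m < N"
  shows "(\<lambda>\<omega>. of_bool (A t m \<omega> = i \<longleftrightarrow> m = n) :: real) \<in> borel_measurable P"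
  using measurable_compose[OF A_rv[OF assms] measurable_count_space_eq1[THEN iffD2],
      of "\<lambda>k. of_bool (k = i \<longleftrightarrow> m = n)" borel] by simp

lemma choice_integrable:
  assumes "1 \<le> t" "m < N"
  shows "integrable P (\<lambda>\<omega>. of_bool (A t m \<omega> = i \<longleftrightarrow> m = n) :: real)"
  by (rule integrable_const_bound[where B=1]) (auto intro: choice_measurable[OF assms])

lemma solo_measurable:
  assumes "n < N" "1 \<le> t"
  shows "(\<lambda>\<omega>. of_bool (solo N A t n i \<omega>) :: real) \<in> borel_measurable P"
  unfolding of_bool_solo_eq_prod[OF assms(1)]
  using choice_measurable[OF assms(2)] by (intro borel_measurable_prod) auto

lemma expectation_choice:
  assumes "1 \<le> t" "m < N" "i < M"
  shows "expectation (\<lambda>\<omega>. of_bool (A t m \<omega> = i \<longleftrightarrow> m = n)) = (if m = n then 1 / real M else 1 - 1 / real M)"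
proof -
  have event: "{\<omega> \<in> space P. A t m \<omega> = i} \<in> events"
    using A_rv[OF assms(1,2)] by measurable
  have "expectation (\<lambda>\<omega>. of_bool (A t m \<omega> = i) :: real) = expectation (indicator {\<omega> \<in> space P. A t m \<omega> = i})"
    by (intro Bochner_Integration.integral_cong) (auto simp: indicator_def)
  also have "\<dots> = 1 / real M" using event A_unif[OF assms] by simp
  finally have choice: "expectation (\<lambda>\<omega>. of_bool (A t m \<omega> = i) :: real) = 1 / real M" .
  have "integrable P (\<lambda>\<omega>. of_bool (A t m \<omega> = i) :: real)"
    using choice_integrable[OF assms(1,2), of i m] by simp
  then have "expectation (\<lambda>\<omega>. 1 - of_bool (A t m \<omega> = i) :: real) = 1 - 1 / real M"
    using choice by (simp add: prob_space)
  moreover have "m \<noteq> n \<Longrightarrow> (\<lambda>\<omega>. of_bool (A t m \<omega> = i \<longleftrightarrow> m = n) :: real) = (\<lambda>\<omega>. 1 - of_bool (A t m \<omega> = i))"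
    by (auto simp: fun_eq_iff)
  ultimately show ?thesis using choice by (cases "m = n") auto
qed

lemma expectation_solo:
  assumes n: "n < N" and i: "i < M" and t: "1 \<le> t"
  shows "expectation (\<lambda>\<omega>. of_bool (solo N A t n i \<omega>)) = 1 / real M * (1 - 1 / real M) ^ (N - 1)"
proof -
  have "indep_vars (\<lambda>_. borel) (\<lambda>m \<omega>. (\<lambda>f. of_bool (f (Inr (t, m)) = real i \<longleftrightarrow> m = n) :: real)
          (restrict (\<lambda>j. bandit_var r A j \<omega>) {Inr (t, m)})) {..<N}"
    using t by (intro indep_vars_of_disjoint_coordinates[OF indep] measurable_PiM_component_comp
        borel_measurable_of_bool_eq_iff) (auto simp: bandit_index_def disjoint_family_on_def)
  then have indep_choices: "indep_vars (\<lambda>_. borel) (\<lambda>m \<omega>. of_bool (A t m \<omega> = i \<longleftrightarrow> m = n) :: real) {..<N}"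
    by (simp add: bandit_var_def)
  have "expectation (\<lambda>\<omega>. \<Prod>m<N. of_bool (A t m \<omega> = i \<longleftrightarrow> m = n) :: real)
             = (\<Prod>m<N. expectation (\<lambda>\<omega>. of_bool (A t m \<omega> = i \<longleftrightarrow> m = n)))"
    using indep_vars_lebesgue_integral[OF _ indep_choices] choice_integrable[OF t] by auto
  then have "expectation (\<lambda>\<omega>. of_bool (solo N A t n i \<omega>) :: real)
             = (\<Prod>m<N. expectation (\<lambda>\<omega>. of_bool (A t m \<omega> = i \<longleftrightarrow> m = n)))"
    by (simp add: of_bool_solo_eq_prod[OF n])
  also have "\<dots> = (\<Prod>m<N. if m = n then 1 / real M else 1 - 1 / real M)"
    using expectation_choice[OF t _ i] by (intro prod.cong) auto
  also have "\<dots> = 1 / real M * (1 - 1 / real M) ^ (N - 1)"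
    using n by (simp add: prod.If_cases Int_absorb1 Diff_eq[symmetric])
  finally show ?thesis .
qed

lemma expectation_solo_ge:
  assumes "n < N" "i < M" "1 \<le> t"
  shows "1 / (3 * real M) \<le> expectation (\<lambda>\<omega>. of_bool (solo N A t n i \<omega>))"
proof -
  have "1 / 3 \<le> exp (-1::real)"
    using exp_le by (simp add: exp_minus inverse_eq_divide field_simps)
  also have "\<dots> \<le> (1 - 1 / real M) ^ (N - 1)"
    by (rule exp_neg_one_le_power[OF N_pos N_le_M])
  finally have "1 / real M * (1 / 3) \<le> 1 / real M * (1 - 1 / real M) ^ (N - 1)"
    by (intro mult_left_mono) auto
  then show ?thesis by (simp add: expectation_solo[OF assms])
qed

lemma reward_mgf_le:
  assumes ni: "n < N" "i < M" and t: "1 \<le> t" and s: "s \<in> {1, -1}" and x: "0 < x"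
  shows "integrable P (\<lambda>\<omega>. exp (x / ((\<sigma> n i)\<^sup>2 + b n i * x) * (s * (r n i t \<omega> - mu n i) - x)))
         \<and> expectation (\<lambda>\<omega>. exp (x / ((\<sigma> n i)\<^sup>2 + b n i * x) * (s * (r n i t \<omega> - mu n i) - x)))
             \<le> exp (- bernstein_exponent ((\<sigma> n i)\<^sup>2) (b n i) x)"
proof -
  define D where "D = (\<sigma> n i)\<^sup>2 + b n i * x"
  define l where "l = x / D"
  define \<eta> where "\<eta> = x\<^sup>2 / (2 * D)"
  define X where "X \<omega> = s * (r n i t \<omega> - mu n i)" for \<omega>
  have var: "0 < (\<sigma> n i)\<^sup>2" and b: "0 < b n i" using variance_pos[OF ni] b_pos[OF ni] by auto
  have D: "0 < D" using var b x by (simp add: D_def add_pos_pos)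
  have l: "0 \<le> l" "l * b n i < 1" using x D var by (simp_all add: l_def D_def field_simps)
  have one_minus: "1 - l * b n i = (\<sigma> n i)\<^sup>2 / D" using D by (simp add: l_def D_def field_simps)
  have rate: "l\<^sup>2 * (\<sigma> n i)\<^sup>2 / (2 * (1 - l * b n i)) = \<eta>" "l * x = 2 * \<eta>"
    unfolding one_minus using D var by (auto simp: l_def \<eta>_def field_simps power2_eq_square)
  have s_abs: "\<bar>s\<bar> = 1" using s by auto
  have "integrable P (r n i t)" "expectation (r n i t) = mu n i" using r_mean[OF ni t] by auto
  then have "integrable P X" "expectation X = 0" by (simp_all add: X_def[abs_def] prob_space)
  moreover have "(\<lambda>\<omega>. \<bar>X \<omega>\<bar> ^ j) = (\<lambda>\<omega>. \<bar>r n i t \<omega> - mu n i\<bar> ^ j)" for j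
    using s_abs by (simp add: X_def abs_mult)
  moreover from this[of 2] have "(\<lambda>\<omega>. (X \<omega>)\<^sup>2) = (\<lambda>\<omega>. (r n i t \<omega> - mu n i)\<^sup>2)" by simp
  ultimately have mgf: "integrable P (\<lambda>\<omega>. exp (l * X \<omega>))"
      "expectation (\<lambda>\<omega>. exp (l * X \<omega>)) \<le> 1 + \<eta>"
    using bernstein_mgf_le[of X "(\<sigma> n i)\<^sup>2" "b n i" l] r_var[OF ni t] bernstein[OF ni t] l b rate(1)
    by auto
  have shift: "(\<lambda>\<omega>. exp (l * (X \<omega> - x))) = (\<lambda>\<omega>. exp (- (l * x)) * exp (l * X \<omega>))"
    by (simp add: fun_eq_iff right_diff_distrib exp_diff exp_minus field_simps)
  have "expectation (\<lambda>\<omega>. exp (l * (X \<omega> - x))) \<le> exp (- (l * x)) * (1 + \<eta>)"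
    unfolding shift using mgf by simp
  also have "\<dots> \<le> exp (- (l * x)) * exp \<eta>"
    by (intro mult_left_mono exp_ge_add_one_self) simp
  also have "\<dots> = exp (- \<eta>)" using rate(2) by (simp add: mult_exp_exp)
  finally have "expectation (\<lambda>\<omega>. exp (l * (X \<omega> - x))) \<le> exp (- \<eta>)" .
  moreover have "integrable P (\<lambda>\<omega>. exp (l * (X \<omega> - x)))" unfolding shift using mgf by simp
  moreover have "bernstein_exponent ((\<sigma> n i)\<^sup>2) (b n i) x = \<eta>" by (simp add: bernstein_exponent_def \<eta>_def D_def)
  ultimately show ?thesis by (simp add: l_def D_def X_def)
qed

definition deviation_term :: "nat \<Rightarrow> nat \<Rightarrow> real \<Rightarrow> real \<Rightarrow> nat \<Rightarrow> 'a \<Rightarrow> real" where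
  "deviation_term n i s x t \<omega> = of_bool (solo N A t n i \<omega>) * (s * (r n i t \<omega> - mu n i) - x)"

definition deviation :: "nat \<Rightarrow> nat \<Rightarrow> nat \<Rightarrow> real \<Rightarrow> real \<Rightarrow> 'a set" where
  "deviation T n i s x = {\<omega> \<in> space P. 0 \<le> (\<Sum>t\<in>{1..T}. deviation_term n i s x t \<omega>)}"

lemma deviation_term_measurable:
  assumes "n < N" "i < M" "1 \<le> t"
  shows "deviation_term n i s x t \<in> borel_measurable P"
proof -
  have "r n i t \<in> borel_measurable P"
    using r_mean[OF assms] by (simp add: borel_measurable_integrable)
  then show ?thesis
    using solo_measurable[OF assms(1,3)] unfolding deviation_term_def[abs_def] by measurable
qed

lemma deviation_sets [measurable]:
  assumes "n < N" "i < M"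
  shows "deviation T n i s x \<in> events"
  unfolding deviation_def using deviation_term_measurable[OF assms] by measurable

lemma turn_mgf_le:
  assumes ni: "n < N" "i < M" and t: "1 \<le> t" and s: "s \<in> {1, -1}" and x: "0 < x"
  defines "l \<equiv> x / ((\<sigma> n i)\<^sup>2 + b n i * x)"
  shows "integrable P (\<lambda>\<omega>. exp (l * deviation_term n i s x t \<omega>))
         \<and> expectation (\<lambda>\<omega>. exp (l * deviation_term n i s x t \<omega>))
             \<le> 1 - 1 / (3 * real M) * (1 - exp (- bernstein_exponent ((\<sigma> n i)\<^sup>2) (b n i) x))"
proof -
  define S where "S \<omega> = (of_bool (solo N A t n i \<omega>) :: real)" for \<omega>
  define F where "F \<omega> = exp (l * (s * (r n i t \<omega> - mu n i) - x))" for \<omega>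
  let ?V = "\<lambda>\<omega>. restrict (\<lambda>j. bandit_var r A j \<omega>)"
  have "indep_var (PiM {Inr (t, m) | m. m < N} (\<lambda>_. borel)) (\<lambda>\<omega>. ?V \<omega> {Inr (t, m) | m. m < N})
                  (PiM {Inl (n, i, t)} (\<lambda>_. borel)) (\<lambda>\<omega>. ?V \<omega> {Inl (n, i, t)})"
    using ni t by (intro indep_var_restrict[OF indep]) (auto simp: bandit_index_def)
  then have "indep_var borel (solo_coordinates N t n i \<circ> (\<lambda>\<omega>. ?V \<omega> {Inr (t, m) | m. m < N}))
                       borel ((\<lambda>f. exp (l * (s * (f (Inl (n, i, t)) - mu n i) - x))) \<circ> (\<lambda>\<omega>. ?V \<omega> {Inl (n, i, t)}))"
    by (intro indep_var_compose measurable_PiM_component_comp) (auto intro: measurable_solo_coordinates)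
  moreover have "solo_coordinates N t n i \<circ> (\<lambda>\<omega>. ?V \<omega> {Inr (t, m) | m. m < N}) = S"
    using ni by (auto simp: fun_eq_iff S_def solo_coordinates_restrict)
  moreover have "(\<lambda>f. exp (l * (s * (f (Inl (n, i, t)) - mu n i) - x))) \<circ> (\<lambda>\<omega>. ?V \<omega> {Inl (n, i, t)}) = F"
    by (simp add: fun_eq_iff F_def bandit_var_def)
  ultimately have indep_SF: "indep_var borel S borel F" by simp
  have "(\<lambda>\<omega>. exp (l * deviation_term n i s x t \<omega>)) = (\<lambda>\<omega>. 1 - S \<omega> + S \<omega> * F \<omega>)"
    by (simp add: fun_eq_iff deviation_term_def S_def F_def)
  moreover have "0 \<le> bernstein_exponent ((\<sigma> n i)\<^sup>2) (b n i) x"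
    using x b_pos[OF ni] by (simp add: bernstein_exponent_def)
  ultimately show ?thesis
  proof (simp only:, intro expectation_switched_le[OF indep_SF])
    show "S \<in> borel_measurable P" unfolding S_def using solo_measurable[OF ni(1) t] .
    show "1 / (3 * real M) \<le> expectation S" unfolding S_def using expectation_solo_ge[OF ni t] .
    show "integrable P F" "expectation F \<le> exp (- bernstein_exponent ((\<sigma> n i)\<^sup>2) (b n i) x)"
      unfolding F_def l_def using reward_mgf_le[OF ni t s x] by auto
  qed (auto simp: S_def)
qed

lemma indep_turns:
  assumes ni: "n < N" "i < M"
  shows "indep_vars (\<lambda>_. borel) (\<lambda>t \<omega>. exp (l * deviation_term n i s x t \<omega>)) {1..T}"
proof -
  define K where "K t = insert (Inl (n, i, t)) {Inr (t, m) | m. m < N}" for t :: nat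
  define g where "g t f = exp (l * (solo_coordinates N t n i f * (s * (f (Inl (n, i, t)) - mu n i) - x)))"
    for t f
  have "indep_vars (\<lambda>_. borel) (\<lambda>t \<omega>. g t (restrict (\<lambda>j. bandit_var r A j \<omega>) (K t))) {1..T}"
  proof (rule indep_vars_of_disjoint_coordinates[OF indep])
    fix t
    have [measurable]: "solo_coordinates N t n i \<in> borel_measurable (PiM (K t) (\<lambda>_. borel))"
      by (rule measurable_solo_coordinates) (simp add: K_def)
    have [measurable]: "(\<lambda>f. f (Inl (n, i, t))) \<in> borel_measurable (PiM (K t) (\<lambda>_. borel))"
      by (rule measurable_component_singleton) (simp add: K_def)
    show "g t \<in> borel_measurable (PiM (K t) (\<lambda>_. borel))"
      unfolding g_def by measurable
  qed (use ni in \<open>auto simp: K_def bandit_index_def disjoint_family_on_def\<close>)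
  moreover have "g t (restrict (\<lambda>j. bandit_var r A j \<omega>) (K t)) = exp (l * deviation_term n i s x t \<omega>)" for t \<omega>
  proof -
    have "solo_coordinates N t n i (restrict (\<lambda>j. bandit_var r A j \<omega>) (K t)) = of_bool (solo N A t n i \<omega>)"
      using ni by (intro solo_coordinates_restrict) (auto simp: K_def)
    then show ?thesis by (simp add: g_def K_def deviation_term_def bandit_var_def)
  qed
  ultimately show ?thesis by simp
qed

lemma deviation_prob_le:
  assumes ni: "n < N" "i < M" and s: "s \<in> {1, -1}" and x: "0 < x"
  shows "prob (deviation T n i s x)
         \<le> exp (- real T * (1 - exp (- bernstein_exponent ((\<sigma> n i)\<^sup>2) (b n i) x)) / (3 * real M))"
proof -
  define l where "l = x / ((\<sigma> n i)\<^sup>2 + b n i * x)"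
  define y where "y = 1 / (3 * real M) * (1 - exp (- bernstein_exponent ((\<sigma> n i)\<^sup>2) (b n i) x))"
  have l: "0 \<le> l" using x b_pos[OF ni] by (simp add: l_def)
  have "0 \<le> bernstein_exponent ((\<sigma> n i)\<^sup>2) (b n i) x"
    using x b_pos[OF ni] by (simp add: bernstein_exponent_def)
  then have "0 \<le> 1 - exp (- bernstein_exponent ((\<sigma> n i)\<^sup>2) (b n i) x)"
    "1 - exp (- bernstein_exponent ((\<sigma> n i)\<^sup>2) (b n i) x) \<le> 1" by auto
  moreover have "1 / (3 * real M) \<le> 1" using N_pos N_le_M by simp
  ultimately have y: "0 \<le> y" "y \<le> 1"
    unfolding y_def by (simp_all only: mult_nonneg_nonneg mult_le_one zero_le_divide_1_iff of_nat_0_le_iff)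
  have "prob (deviation T n i s x) \<le> (1 - y) ^ card {1..T}"
    unfolding deviation_def
    using ni turn_mgf_le[OF ni _ s x] deviation_term_measurable[OF ni] l
    by (intro prob_sum_nonneg_le_mgf_power indep_turns) (auto simp: l_def y_def)
  also have "\<dots> = (1 - y) ^ T" by simp
  also have "\<dots> \<le> exp (- y) ^ T"
    using y exp_ge_add_one_self[of "- y"] by (intro power_mono) simp_all
  also have "\<dots> = exp (- real T * (1 - exp (- bernstein_exponent ((\<sigma> n i)\<^sup>2) (b n i) x)) / (3 * real M))"
    by (simp add: y_def exp_of_nat_mult[symmetric])
  finally show ?thesis .
qed

definition deviation_union :: "nat \<Rightarrow> real \<Rightarrow> 'a set" where
  "deviation_union T x = (\<Union>p \<in> {..<N} \<times> {..<M} \<times> {1, -1}. case p of (n, i, s) \<Rightarrow> deviation T n i s x)"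

lemma deviation_union_sets: "deviation_union T x \<in> events"
  unfolding deviation_union_def by (intro sets.finite_UN) auto

lemma err_event_subset_deviation_union:
  assumes astar: "astar \<in> profiles N M"
    and gap: "\<And>a. a \<in> profiles N M \<Longrightarrow> a \<noteq> astar \<Longrightarrow> objective N mu a + \<Delta> \<le> objective N mu astar"
  shows "err_event P N M A r T astar \<subseteq> deviation_union T (\<Delta> / (2 * N))"
proof
  fix \<omega> assume \<omega>: "\<omega> \<in> err_event P N M A r T astar"
  define e where "e n i = emp_mean N A r T n i \<omega>" for n i
  obtain a where a: "a \<in> profiles N M" "a \<noteq> astar" and a_max: "objective N e astar \<le> objective N e a"
    using \<omega> astar unfolding err_event_def e_def by blast
  show "\<omega> \<in> deviation_union T (\<Delta> / (2 * N))"
  proof (rule ccontr)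
    assume no_dev: "\<omega> \<notin> deviation_union T (\<Delta> / (2 * N))"
    have "\<bar>e n i - mu n i\<bar> < \<Delta> / (2 * N)" if "n < N" "i < M" for n i
      unfolding e_def emp_mean_def
    proof (rule abs_mean_diff_less)
      fix s :: real assume "s \<in> {1, -1}"
      then have "\<omega> \<notin> deviation T n i s (\<Delta> / (2 * N))"
        using no_dev that unfolding deviation_union_def by blast
      moreover have "\<omega> \<in> space P" using \<omega> by (simp add: err_event_def)
      ultimately show "(\<Sum>t\<in>solo_turns N A T n i \<omega>. s * (r n i t \<omega> - mu n i) - \<Delta> / (2 * N)) < 0"
        unfolding deviation_def deviation_term_def sum_solo_turns by auto
    qed (simp add: solo_turns_def)
    then have "objective N e a < objective N e astar"
      using objective_lt_of_close[OF gap[OF a] _ a(1) astar N_pos] by blast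
    then show False using a_max by simp
  qed
qed

lemma deviation_union_prob_le:
  assumes x: "0 < x" and S: "\<And>n i. n < N \<Longrightarrow> i < M \<Longrightarrow> \<sigma> n i \<le> S"
    and B: "\<And>n i. n < N \<Longrightarrow> i < M \<Longrightarrow> b n i \<le> B"
  shows "prob (deviation_union T x)
         \<le> 2 * real N * real M * exp (- real T * (1 - exp (- bernstein_exponent (S\<^sup>2) B x)) / (3 * real M))"
proof -
  define I where "I = {..<N} \<times> {..<M} \<times> {1, -1 :: real}"
  define bound where "bound = exp (- real T * (1 - exp (- bernstein_exponent (S\<^sup>2) B x)) / (3 * real M))"
  have dev_le: "prob (deviation T n i s x) \<le> bound" if "(n, i, s) \<in> I" for n i s
  proof -
    have ni: "n < N" "i < M" and s: "s \<in> {1, -1}" using that by (auto simp: I_def)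
    have "(\<sigma> n i)\<^sup>2 \<le> S\<^sup>2" using S[OF ni] \<sigma>_nonneg[OF ni] by (intro power_mono) auto
    then have "bernstein_exponent (S\<^sup>2) B x \<le> bernstein_exponent ((\<sigma> n i)\<^sup>2) (b n i) x"
      using x b_pos[OF ni] B[OF ni] variance_pos[OF ni]
      by (intro bernstein_exponent_antimono add_pos_pos mult_pos_pos) auto
    then have "exp (- real T * (1 - exp (- bernstein_exponent ((\<sigma> n i)\<^sup>2) (b n i) x)) / (3 * real M)) \<le> bound"
      unfolding bound_def by (intro exp_mono divide_right_mono mult_left_mono_neg) auto
    then show ?thesis using deviation_prob_le[OF ni s x, of T] by linarith
  qed
  have "prob (deviation_union T x) \<le> (\<Sum>p \<in> I. prob (case p of (n, i, s) \<Rightarrow> deviation T n i s x))"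
    unfolding deviation_union_def I_def by (intro measure_UNION_le) auto
  also have "\<dots> \<le> real (card I) * bound"
    by (intro sum_bounded_above) (use dev_le in auto)
  also have "card I = 2 * N * M" by (simp add: I_def card_cartesian_product)
  finally show ?thesis by (simp add: bound_def)
qed

lemma deviation_union_epoch_prob_le:
  assumes \<Delta>: "0 < \<Delta>" and S: "\<And>n i. n < N \<Longrightarrow> i < M \<Longrightarrow> \<sigma> n i \<le> S"
    and B: "\<And>n i. n < N \<Longrightarrow> i < M \<Longrightarrow> b n i \<le> B"
    and c1: "0 < c1" and \<delta>: "0 < \<delta>" and M: "2 \<le> M"
  shows "prob (deviation_union (explore_turns c1 \<delta> k) (\<Delta> / (2 * N)))
         \<le> 2 * real N * real M
             * exp (- (\<Delta>\<^sup>2 / (real M * real N ^ 2 * (80 * S\<^sup>2 + 40 * B / real N * \<Delta>)) * c1)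
                    * (real k / 2) powr \<delta> * real k)
           + real N * real M * exp (- (c1 / (36 * real M ^ 2)) * (real k / 2) powr \<delta> * real k)"
proof -
  define x where "x = \<Delta> / (2 * N)"
  define \<eta> where "\<eta> = bernstein_exponent (S\<^sup>2) B x"
  define T' where "T' = c1 * (real k / 2) powr \<delta> * real k"
  have N_M: "0 < real N" "0 < real M" using N_pos N_le_M by auto
  have x: "0 < x" using \<Delta> N_pos by (simp add: x_def)
  have "0 < b 0 0" "b 0 0 \<le> B" "0 \<le> \<sigma> 0 0" "\<sigma> 0 0 \<le> S"
    using b_pos B \<sigma>_nonneg S N_pos N_le_M by auto
  then have SB: "0 < S\<^sup>2 + B * x" using x by (intro add_nonneg_pos) auto
  then have \<eta>: "0 < \<eta>" using x by (simp add: \<eta>_def bernstein_exponent_def)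
  have rate: "\<Delta>\<^sup>2 / (real M * real N ^ 2 * (80 * S\<^sup>2 + 40 * B / real N * \<Delta>)) = \<eta> / (10 * real M)"
    using gap_rate_eq_bernstein_exponent[of N M S B \<Delta>] N_M SB by (simp add: \<eta>_def x_def)
  have "prob (deviation_union (explore_turns c1 \<delta> k) x)
        \<le> 2 * real N * real M * exp (- (\<eta> / (10 * real M)) * T') + real N * real M * exp (- (T' / (36 * real M ^ 2)))"
  proof (rule chernoff_bound_le_two_rates[OF \<eta> N_pos M])
    show "T' / 2 \<le> real (explore_turns c1 \<delta> k)" "0 \<le> T'"
      using explore_turns_ge[OF c1 \<delta>, of k] c1 by (simp_all add: T'_def)
    show "prob (deviation_union (explore_turns c1 \<delta> k) x)
          \<le> 2 * real N * real M * exp (- real (explore_turns c1 \<delta> k) * (1 - exp (- \<eta>)) / (3 * real M))"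
      unfolding \<eta>_def by (rule deviation_union_prob_le[OF x S B])
  qed simp
  then show ?thesis unfolding rate T'_def x_def by (simp add: mult.assoc)
qed

lemma err_event_prob_le:
  assumes astar: "astar \<in> profiles N M"
    and gap: "\<And>a. a \<in> profiles N M \<Longrightarrow> a \<noteq> astar \<Longrightarrow> objective N mu a + \<Delta> \<le> objective N mu astar"
    and \<Delta>: "0 < \<Delta>" and S: "\<And>n i. n < N \<Longrightarrow> i < M \<Longrightarrow> \<sigma> n i \<le> S"
    and B: "\<And>n i. n < N \<Longrightarrow> i < M \<Longrightarrow> b n i \<le> B"
    and c1: "0 < c1" and \<delta>: "0 < \<delta>" and M: "2 \<le> M"
  defines "w \<equiv> \<Delta>\<^sup>2 / (real M * real N ^ 2 * (80 * S\<^sup>2 + 40 * B / real N * \<Delta>))"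
  shows "prob (err_event P N M A r (explore_turns c1 \<delta> k) astar)
         \<le> 2 * real N * real M * exp (- w * c1 * (real k / 2) powr \<delta> * real k)
           + real N * real M * exp (- (c1 * (real k / 2) powr \<delta> / (36 * real M ^ 2)) * real k)"
proof -
  have "prob (err_event P N M A r (explore_turns c1 \<delta> k) astar)
        \<le> prob (deviation_union (explore_turns c1 \<delta> k) (\<Delta> / (2 * N)))"
    using err_event_subset_deviation_union[OF astar gap] by (intro finite_measure_mono deviation_union_sets)
  also have "\<dots> \<le> 2 * real N * real M * exp (- (w * c1) * (real k / 2) powr \<delta> * real k)
      + real N * real M * exp (- (c1 / (36 * real M ^ 2)) * (real k / 2) powr \<delta> * real k)"
    unfolding w_def by (rule deviation_union_epoch_prob_le[OF \<Delta> S B c1 \<delta> M])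
  finally show ?thesis by (simp add: mult.assoc)
qed

lemma err_event_union_prob_le:
  assumes astar: "astar \<in> profiles N M"
    and gap: "\<And>a. a \<in> profiles N M \<Longrightarrow> a \<noteq> astar \<Longrightarrow> objective N mu a + \<Delta> \<le> objective N mu astar"
    and \<Delta>: "0 < \<Delta>" and S: "\<And>n i. n < N \<Longrightarrow> i < M \<Longrightarrow> \<sigma> n i \<le> S"
    and B: "\<And>n i. n < N \<Longrightarrow> i < M \<Longrightarrow> b n i \<le> B"
    and c1: "0 < c1" and \<delta>: "0 < \<delta>" and M: "2 \<le> M" and k: "1 \<le> k"
  defines "w \<equiv> \<Delta>\<^sup>2 / (real M * real N ^ 2 * (80 * S\<^sup>2 + 40 * B / real N * \<Delta>))"
  shows "prob (\<Union>rr \<in> {0..k div 2}. err_event P N M A r (explore_turns c1 \<delta> (k - rr)) astar)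
         \<le> 2 * real N * real M / (1 - exp (- w * c1 * (real k / 4) powr \<delta>))
             * exp (- (w / 2) * c1 * (real k / 4) powr \<delta> * real k)
           + real N * real M / (1 - exp (- (1 / (36 * real M ^ 2)) * c1 * (real k / 4) powr \<delta>))
             * exp (- (1 / (72 * real M ^ 2)) * c1 * (real k / 4) powr \<delta> * real k)"
proof -
  define D where "D j = deviation_union (explore_turns c1 \<delta> j) (\<Delta> / (2 * N))" for j
  define v where "v = c1 / (36 * real M ^ 2)"
  have "0 < b 0 0" "0 \<le> \<sigma> 0 0" using b_pos \<sigma>_nonneg N_pos N_le_M by auto
  then have "0 < 80 * S\<^sup>2 + 40 * B / real N * \<Delta>"
    using S[of 0 0] B[of 0 0] N_pos N_le_M \<Delta> by (intro add_nonneg_pos) auto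
  then have rates: "0 < w * c1" "0 < v" using N_pos M \<Delta> c1 by (simp_all add: w_def v_def)
  have "prob (\<Union>rr \<in> {0..k div 2}. err_event P N M A r (explore_turns c1 \<delta> (k - rr)) astar)
        \<le> prob (\<Union>rr \<in> {0..k div 2}. D (k - rr))"
    using err_event_subset_deviation_union[OF astar gap] unfolding D_def
    by (intro finite_measure_mono sets.finite_UN deviation_union_sets) blast+
  also have "\<dots> \<le> (\<Sum>rr \<in> {0..k div 2}. prob (D (k - rr)))"
    unfolding D_def by (intro measure_UNION_le deviation_union_sets) simp
  also have "\<dots> \<le> 2 * real N * real M * (\<Sum>rr \<in> {0..k div 2}. exp (- (w * c1) * (real (k - rr) / 2) powr \<delta> * real (k - rr)))
      + real N * real M * (\<Sum>rr \<in> {0..k div 2}. exp (- v * (real (k - rr) / 2) powr \<delta> * real (k - rr)))"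
    unfolding sum_distrib_left sum.distrib[symmetric] D_def w_def v_def
    by (intro sum_mono deviation_union_epoch_prob_le[OF \<Delta> S B c1 \<delta> M])
  also have "\<dots> \<le> 2 * real N * real M * (exp (- (w * c1 / 2) * (real k / 4) powr \<delta> * real k) / (1 - exp (- (w * c1) * (real k / 4) powr \<delta>)))
      + real N * real M * (exp (- (v / 2) * (real k / 4) powr \<delta> * real k) / (1 - exp (- v * (real k / 4) powr \<delta>)))"
    using rates by (intro add_mono mult_left_mono sum_exp_epoch_tail_le \<delta> k) auto
  finally show ?thesis by (simp add: v_def mult.assoc)
qed

end

theorem lemma2:
  fixes P :: "'a measure" and N M :: nat
    and r :: "nat \<Rightarrow> nat \<Rightarrow> nat \<Rightarrow> 'a \<Rightarrow> real"
    and A :: "nat \<Rightarrow> nat \<Rightarrow> 'a \<Rightarrow> nat"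
    and mu \<sigma> b :: "nat \<Rightarrow> nat \<Rightarrow> real"
    and c1 \<delta> :: real and astar :: "nat \<Rightarrow> nat" and k :: nat
  assumes P: "prob_space P"
    and NM: "1 \<le> N" "N \<le> M"
    and r_rv: "\<And>n i t. n < N \<Longrightarrow> i < M \<Longrightarrow> 1 \<le> t \<Longrightarrow> r n i t \<in> borel_measurable P"
    and r_id: "\<And>n i t. n < N \<Longrightarrow> i < M \<Longrightarrow> 1 \<le> t \<Longrightarrow>
                 distr P borel (r n i t) = distr P borel (r n i 1)"
    and r_mean: "\<And>n i t. n < N \<Longrightarrow> i < M \<Longrightarrow> 1 \<le> t \<Longrightarrow>
                 integrable P (r n i t) \<and> (\<integral>\<omega>. r n i t \<omega> \<partial>P) = mu n i"
    and mu_pos: "\<And>n i. n < N \<Longrightarrow> i < M \<Longrightarrow> mu n i > 0"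
    and r_var: "\<And>n i t. n < N \<Longrightarrow> i < M \<Longrightarrow> 1 \<le> t \<Longrightarrow>
                 integrable P (\<lambda>\<omega>. (r n i t \<omega> - mu n i)^2) \<and>
                 (\<integral>\<omega>. (r n i t \<omega> - mu n i)^2 \<partial>P) = (\<sigma> n i)^2"
    and \<sigma>_nonneg: "\<And>n i. n < N \<Longrightarrow> i < M \<Longrightarrow> \<sigma> n i \<ge> 0"
    and r_cont: "\<And>n i t x. n < N \<Longrightarrow> i < M \<Longrightarrow> 1 \<le> t \<Longrightarrow>
                 measure P {\<omega> \<in> space P. r n i t \<omega> = x} = 0"
    and b_pos: "\<And>n i. n < N \<Longrightarrow> i < M \<Longrightarrow> b n i > 0"
    and bernstein: "\<And>n i t j. n < N \<Longrightarrow> i < M \<Longrightarrow> 1 \<le> t \<Longrightarrow> 3 \<le> j \<Longrightarrow>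
                 integrable P (\<lambda>\<omega>. \<bar>r n i t \<omega> - mu n i\<bar> ^ j) \<and>
                 (\<integral>\<omega>. \<bar>r n i t \<omega> - mu n i\<bar> ^ j \<partial>P)
                   \<le> 1/2 * fact j * (\<sigma> n i)^2 * (b n i) ^ (j - 2)"
    and A_rv: "\<And>t n. 1 \<le> t \<Longrightarrow> n < N \<Longrightarrow> A t n \<in> measurable P (count_space UNIV)"
    and A_range: "\<And>t n \<omega>. 1 \<le> t \<Longrightarrow> n < N \<Longrightarrow> \<omega> \<in> space P \<Longrightarrow> A t n \<omega> < M"
    and A_unif: "\<And>t n i. 1 \<le> t \<Longrightarrow> n < N \<Longrightarrow> i < M \<Longrightarrow>
                 measure P {\<omega> \<in> space P. A t n \<omega> = i} = 1 / real M"
    and indep: "prob_space.indep_vars P (\<lambda>_. borel)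
                 (\<lambda>x. case x of Inl (n, i, t) \<Rightarrow> r n i t | Inr (t, n) \<Rightarrow> (\<lambda>\<omega>. real (A t n \<omega>)))
                 ({Inl (n, i, t) | n i t. n < N \<and> i < M \<and> 1 \<le> t} \<union>
                  {Inr (t, n) | t n. 1 \<le> t \<and> n < N})"
    and c1: "c1 > 0" and \<delta>: "\<delta> > 0"
    and astar: "astar \<in> profiles N M"
    and astar_unique: "\<And>a. a \<in> profiles N M \<Longrightarrow> a \<noteq> astar \<Longrightarrow>
                 objective N mu a < objective N mu astar"
    and J2_exists: "\<exists>a \<in> profiles N M. objective N mu a < J1 N M mu"
    and k: "1 \<le> k"
  defines "w \<equiv> (J1 N M mu - J2 N M mu)^2 /
             (real M * real N ^ 2 * (80 * (Max {\<sigma> n i | n i. n < N \<and> i < M})^2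
               + 40 * Max {b n i | n i. n < N \<and> i < M} / real N * (J1 N M mu - J2 N M mu)))"
    and "Pe \<equiv> (\<lambda>j. err_event P N M A r (explore_turns c1 \<delta> j) astar)"
  shows "(measure P (Pe k)
           \<le> 2 * N * M * exp (- w * c1 * (real k / 2) powr \<delta> * real k)
             + N * M * exp (- (c1 * (real k / 2) powr \<delta> / (36 * real M ^ 2)) * real k)) \<and>
         (measure P (\<Union>rr \<in> {0..k div 2}. Pe (k - rr))
           \<le> 2 * N * M / (1 - exp (- w * c1 * (real k / 4) powr \<delta>))
               * exp (- (w / 2) * c1 * (real k / 4) powr \<delta> * real k)
             + N * M / (1 - exp (- (1 / (36 * real M ^ 2)) * c1 * (real k / 4) powr \<delta>))
               * exp (- (1 / (72 * real M ^ 2)) * c1 * (real k / 4) powr \<delta> * real k))"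
proof -
  interpret bandit_exploration P N M r A mu \<sigma> b
  proof (intro bandit_exploration.intro bandit_exploration_axioms.intro P)
    show "prob_space.indep_vars P (\<lambda>_. borel) (bandit_var r A) (bandit_index N M)"
      using indep unfolding bandit_var_def[abs_def] bandit_index_def .
  qed (fact NM r_mean r_var \<sigma>_nonneg r_cont b_pos bernstein A_rv A_unif)+
  note gap = second_best_gap[OF astar astar_unique J2_exists]
  have S: "\<sigma> n i \<le> Max {\<sigma> n i | n i. n < N \<and> i < M}"
    and B: "b n i \<le> Max {b n i | n i. n < N \<and> i < M}" if "n < N" "i < M" for n i
    using le_Max_grid[OF that] by simp_all
  show ?thesis
    unfolding w_def Pe_def
    using err_event_prob_le[OF astar gap(3) gap(1) S B c1 \<delta> gap(2)]
      err_event_union_prob_le[OF astar gap(3) gap(1) S B c1 \<delta> gap(2) k]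
    by simp
qed

end
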